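(* Let $G_r=(V_r,E_r)$ be an arbitrary directed graph and $(i,j)\in E_r$ an existing edge. Adding to $G_r$ any number of new edges parallel to it, each oriented either as $(i,j)$ or as $(j,i)$, increases the extraction width $\mathrm{ew}(G_r)$ by at most the maximum degree of $G_r$. The same holds if instead of edges, paths between $i$ and $j$ (through new nodes) are added.
   Context: An extraction order of a directed (multi)graph $G=(V,E)$ is a rooted directed acyclic graph $G^{\mathcal X}=(V,E^{\mathcal X},s)$ in which every node is reachable from $s$ and $E^{\mathcal X}$ is obtained from $E$ by reversing some (possibly no) edges. A confluence from $a$ to $b$ is a pair of directed paths in $E^{\mathcal X}$ from $a$ to $b$ sharing no node other than $a,b$. For $e\in E^{\mathcal X}$, its label set $\mathcal L_e$ is the set of nodes $b$ such that $e$ lies on a confluence with target $b$. Each node's outgoing edges are partitioned into bags: classes of the equivalence relation generated by $e\sim e'$ iff $\mathcal L_e\cap\mathcal L_{e'}\ne\emptyset$; bag label set $\mathcal L_B=\bigcup_{e\in B}\mathcal L_e$. The width of $G^{\mathcal X}$ is $\mathrm{ew}_{\mathcal X}(G^{\mathcal X})=1+\max|\mathcal L_B|$ over all bags, and $\mathrm{ew}(G)$ is the minimum width over all extraction orders of $G$. *)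

theory Defs
  imports Main
begin

text \<open>A directed multigraph: vertex set, set of edge identifiers, and for each
edge its tail and head.  Parallel edges are distinct edge identifiers.\<close>

record ('v, 'e) dgraph =
  verts :: "'v set"
  arcs  :: "'e set"
  tail  :: "'e \<Rightarrow> 'v"
  head  :: "'e \<Rightarrow> 'v"

definition wf_dgraph :: "('v, 'e) dgraph \<Rightarrow> bool" where
  "wf_dgraph G \<longleftrightarrow> finite (verts G) \<and> finite (arcs G) \<and>
     (\<forall>e \<in> arcs G. tail G e \<in> verts G \<and> head G e \<in> verts G)"

text \<open>A reorientation is given by a predicate \<open>f\<close>: edge \<open>e\<close> is reversed iff \<open>f e\<close>.\<close>

definition xtail :: "('v, 'e) dgraph \<Rightarrow> ('e \<Rightarrow> bool) \<Rightarrow> 'e \<Rightarrow> 'v" where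
  "xtail G f e = (if f e then head G e else tail G e)"

definition xhead :: "('v, 'e) dgraph \<Rightarrow> ('e \<Rightarrow> bool) \<Rightarrow> 'e \<Rightarrow> 'v" where
  "xhead G f e = (if f e then tail G e else head G e)"

fun xwalk :: "('v, 'e) dgraph \<Rightarrow> ('e \<Rightarrow> bool) \<Rightarrow> 'v \<Rightarrow> 'e list \<Rightarrow> 'v \<Rightarrow> bool" where
  "xwalk G f a [] b \<longleftrightarrow> a = b"
| "xwalk G f a (e # es) b \<longleftrightarrow>
     e \<in> arcs G \<and> xtail G f e = a \<and> xwalk G f (xhead G f e) es b"

definition walk_verts :: "('v, 'e) dgraph \<Rightarrow> ('e \<Rightarrow> bool) \<Rightarrow> 'v \<Rightarrow> 'e list \<Rightarrow> 'v list" where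
  "walk_verts G f a es = a # map (xhead G f) es"

definition xpath :: "('v, 'e) dgraph \<Rightarrow> ('e \<Rightarrow> bool) \<Rightarrow> 'v \<Rightarrow> 'e list \<Rightarrow> 'v \<Rightarrow> bool" where
  "xpath G f a es b \<longleftrightarrow> xwalk G f a es b \<and> distinct (walk_verts G f a es)"

definition is_extraction_order :: "('v, 'e) dgraph \<Rightarrow> ('e \<Rightarrow> bool) \<Rightarrow> 'v \<Rightarrow> bool" where
  "is_extraction_order G f s \<longleftrightarrow>
     s \<in> verts G \<and>
     (\<nexists>v es. es \<noteq> [] \<and> xwalk G f v es v) \<and>
     (\<forall>v \<in> verts G. \<exists>es. xwalk G f s es v)"

definition confluence ::
  "('v, 'e) dgraph \<Rightarrow> ('e \<Rightarrow> bool) \<Rightarrow> 'v \<Rightarrow> 'v \<Rightarrow> 'e list \<Rightarrow> 'e list \<Rightarrow> bool" where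
  "confluence G f a b p q \<longleftrightarrow>
     xpath G f a p b \<and> xpath G f a q b \<and> p \<noteq> q \<and>
     set (walk_verts G f a p) \<inter> set (walk_verts G f a q) \<subseteq> {a, b}"

definition label_set :: "('v, 'e) dgraph \<Rightarrow> ('e \<Rightarrow> bool) \<Rightarrow> 'e \<Rightarrow> 'v set" where
  "label_set G f e =
     {b. \<exists>a p q. confluence G f a b p q \<and> e \<in> set p \<union> set q}"

definition out_arcs :: "('v, 'e) dgraph \<Rightarrow> ('e \<Rightarrow> bool) \<Rightarrow> 'v \<Rightarrow> 'e set" where
  "out_arcs G f v = {e \<in> arcs G. xtail G f e = v}"

text \<open>Generating relation of the bag equivalence at node \<open>v\<close>; its reflexive
transitive closure (it is symmetric) is the generated equivalence on \<open>out_arcs\<close>.\<close>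

definition bag_rel :: "('v, 'e) dgraph \<Rightarrow> ('e \<Rightarrow> bool) \<Rightarrow> 'v \<Rightarrow> 'e \<Rightarrow> 'e \<Rightarrow> bool" where
  "bag_rel G f v e e' \<longleftrightarrow> e \<in> out_arcs G f v \<and> e' \<in> out_arcs G f v \<and>
     label_set G f e \<inter> label_set G f e' \<noteq> {}"

definition bags :: "('v, 'e) dgraph \<Rightarrow> ('e \<Rightarrow> bool) \<Rightarrow> 'e set set" where
  "bags G f = {{e' \<in> out_arcs G f v. (bag_rel G f v)\<^sup>*\<^sup>* e e'} | v e.
                 v \<in> verts G \<and> e \<in> out_arcs G f v}"

definition bag_label_set :: "('v, 'e) dgraph \<Rightarrow> ('e \<Rightarrow> bool) \<Rightarrow> 'e set \<Rightarrow> 'v set" where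
  "bag_label_set G f B = (\<Union>e \<in> B. label_set G f e)"

definition xwidth :: "('v, 'e) dgraph \<Rightarrow> ('e \<Rightarrow> bool) \<Rightarrow> nat" where
  "xwidth G f = 1 + Max (insert 0 ((\<lambda>B. card (bag_label_set G f B)) ` bags G f))"

definition ew :: "('v, 'e) dgraph \<Rightarrow> nat" where
  "ew G = (INF fs \<in> {(f, s). is_extraction_order G f s}. xwidth G (fst fs))"

definition degree :: "('v, 'e) dgraph \<Rightarrow> 'v \<Rightarrow> nat" where
  "degree G v = card {e \<in> arcs G. tail G e = v} + card {e \<in> arcs G. head G e = v}"

definition max_degree :: "('v, 'e) dgraph \<Rightarrow> nat" where
  "max_degree G = Max (insert 0 (degree G ` verts G))"

definition extends :: "('v, 'e) dgraph \<Rightarrow> ('v, 'e) dgraph \<Rightarrow> bool" where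
  "extends G' G \<longleftrightarrow> verts G \<subseteq> verts G' \<and> arcs G \<subseteq> arcs G' \<and>
     (\<forall>e \<in> arcs G. tail G' e = tail G e \<and> head G' e = head G e)"

definition add_parallel_edges ::
  "('v, 'e) dgraph \<Rightarrow> 'v \<Rightarrow> 'v \<Rightarrow> ('v, 'e) dgraph \<Rightarrow> bool" where
  "add_parallel_edges G i j G' \<longleftrightarrow>
     wf_dgraph G' \<and> extends G' G \<and> verts G' = verts G \<and>
     (\<forall>e \<in> arcs G' - arcs G.
        (tail G' e = i \<and> head G' e = j) \<or> (tail G' e = j \<and> head G' e = i))"

definition inner_verts :: "('v, 'e) dgraph \<Rightarrow> 'e list \<Rightarrow> 'v set" where
  "inner_verts G es = set (butlast (map (head G) es))"

definition add_parallel_paths ::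
  "('v, 'e) dgraph \<Rightarrow> 'v \<Rightarrow> 'v \<Rightarrow> ('v, 'e) dgraph \<Rightarrow> bool" where
  "add_parallel_paths G i j G' \<longleftrightarrow>
     wf_dgraph G' \<and> extends G' G \<and>
     (\<exists>ps :: 'e list list.
        (\<forall>p \<in> set ps. length p \<ge> 2 \<and>
            (xpath G' (\<lambda>_. False) i p j \<or> xpath G' (\<lambda>_. False) j p i) \<and>
            set p \<inter> arcs G = {} \<and> inner_verts G' p \<inter> verts G = {}) \<and>
        (\<forall>k < length ps. \<forall>l < length ps. k \<noteq> l \<longrightarrow>
            set (ps ! k) \<inter> set (ps ! l) = {} \<and>
            inner_verts G' (ps ! k) \<inter> inner_verts G' (ps ! l) = {}) \<and>
        arcs G' - arcs G = (\<Union>p \<in> set ps. set p) \<and>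
        verts G' - verts G = (\<Union>p \<in> set ps. inner_verts G' p))"

end

theory Submission
  imports Defs
begin

text \<open>Keep an extraction order of \<open>G\<close> of minimal width on the old edges and orient every new
  edge or path from the tail \<open>I\<close> to the head \<open>J\<close> of the reoriented edge \<open>(i, j)\<close>.
  Contracting each new path onto that edge maps walks of the extension to walks of \<open>G\<close>, so the
  extension is again an extraction order. A confluence of the extension contracts to a confluence
  of \<open>G\<close> with the same ends, unless it consists of two parallel routes from \<open>I\<close> to \<open>J\<close>; hence
  label sets grow by at most \<open>J\<close>, every new bag is covered by an old bag plus \<open>J\<close>, and the width
  grows by at most 1. This is within the bound, as the edge \<open>(i, j)\<close> forces maximum degree at
  least 1.\<close>

section \<open>Walks and paths in a reorientation\<close>

lemma xwalk_append: "xwalk G f a (xs @ ys) c \<longleftrightarrow> (\<exists>b. xwalk G f a xs b \<and> xwalk G f b ys c)"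
  by (induction xs arbitrary: a) auto

lemma walk_verts_Nil [simp]: "walk_verts G f a [] = [a]"
  by (simp add: walk_verts_def)

lemma walk_verts_Cons: "walk_verts G f a (e # es) = a # walk_verts G f (xhead G f e) es"
  by (simp add: walk_verts_def)

lemma walk_verts_append: "walk_verts G f a (xs @ ys) = walk_verts G f a xs @ map (xhead G f) ys"
  by (simp add: walk_verts_def)

lemma length_walk_verts [simp]: "length (walk_verts G f a es) = Suc (length es)"
  by (simp add: walk_verts_def)

lemma walk_verts_nth_0 [simp]: "walk_verts G f a es ! 0 = a"
  by (simp add: walk_verts_def)

lemma walk_verts_nth_Suc: "m < length es \<Longrightarrow> walk_verts G f a es ! Suc m = xhead G f (es ! m)"
  by (simp add: walk_verts_def)

lemma xwalk_last_walk_verts: "xwalk G f a es b \<Longrightarrow> last (walk_verts G f a es) = b"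
  by (induction es arbitrary: a) (auto simp: walk_verts_Cons walk_verts_def)

lemma xwalk_walk_verts_nth_length: "xwalk G f a es b \<Longrightarrow> walk_verts G f a es ! length es = b"
  using xwalk_last_walk_verts[of G f a es b] last_conv_nth[of "walk_verts G f a es"]
  by (simp add: walk_verts_def)

lemma xwalk_xtail_nth:
  "xwalk G f a es b \<Longrightarrow> m < length es \<Longrightarrow> xtail G f (es ! m) = walk_verts G f a es ! m"
proof (induction es arbitrary: a m)
  case (Cons e es)
  then show ?case by (cases m) (auto simp: walk_verts_Cons)
qed simp

lemma xwalk_xtail_hd: "xwalk G f a es b \<Longrightarrow> es \<noteq> [] \<Longrightarrow> xtail G f (hd es) = a"
  by (cases es) auto

lemma xwalk_xtail_last:
  "xwalk G f a es b \<Longrightarrow> es \<noteq> [] \<Longrightarrow> xtail G f (last es) = walk_verts G f a es ! (length es - 1)"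
  using xwalk_xtail_nth[of G f a es b "length es - 1"] by (simp add: last_conv_nth)

lemma xwalk_xhead_last: "xwalk G f a es b \<Longrightarrow> es \<noteq> [] \<Longrightarrow> xhead G f (last es) = b"
  using xwalk_walk_verts_nth_length[of G f a es b] walk_verts_nth_Suc[of "length es - 1" es G f a]
  by (simp add: last_conv_nth)

lemma xwalk_end_unique: "xwalk G f a es b \<Longrightarrow> xwalk G f a es b' \<Longrightarrow> b = b'"
  using xwalk_last_walk_verts by metis

lemma xwalk_take:
  "xwalk G f a es b \<Longrightarrow> n \<le> length es \<Longrightarrow> xwalk G f a (take n es) (walk_verts G f a es ! n)"
proof (induction es arbitrary: a n)
  case (Cons e es)
  then show ?case by (cases n) (auto simp: walk_verts_Cons)
qed simp

lemma xwalk_arcs: "xwalk G f a es b \<Longrightarrow> set es \<subseteq> arcs G"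
  by (induction es arbitrary: a) auto

lemma xtail_in_verts: "wf_dgraph G \<Longrightarrow> e \<in> arcs G \<Longrightarrow> xtail G f e \<in> verts G"
  by (auto simp: wf_dgraph_def xtail_def)

lemma xhead_in_verts: "wf_dgraph G \<Longrightarrow> e \<in> arcs G \<Longrightarrow> xhead G f e \<in> verts G"
  by (auto simp: wf_dgraph_def xhead_def)

lemma xwalk_ends_in_verts:
  "wf_dgraph G \<Longrightarrow> xwalk G f a es b \<Longrightarrow> es \<noteq> [] \<Longrightarrow> a \<in> verts G \<and> b \<in> verts G"
proof (induction es arbitrary: a)
  case (Cons e es)
  then show ?case by (cases es) (auto simp: xtail_in_verts xhead_in_verts)
qed simp

lemma xwalk_cong:
  "(\<And>e. e \<in> set es \<Longrightarrow> f1 e = f2 e) \<Longrightarrow> xwalk G f1 a es b = xwalk G f2 a es b"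
  by (induction es arbitrary: a) (auto simp: xtail_def xhead_def)

lemma walk_verts_cong:
  "(\<And>e. e \<in> set es \<Longrightarrow> f1 e = f2 e) \<Longrightarrow> walk_verts G f1 a es = walk_verts G f2 a es"
  by (auto simp: walk_verts_def xhead_def)

lemma xwalk_rev:
  assumes "\<And>e. e \<in> set es \<Longrightarrow> g e = (\<not> f e)" and "xwalk G f a es b"
  shows "xwalk G g b (rev es) a \<and> walk_verts G g b (rev es) = rev (walk_verts G f a es)"
  using assms
proof (induction es arbitrary: a)
  case (Cons e es)
  have flip: "xtail G g e = xhead G f e" "xhead G g e = xtail G f e"
    using Cons.prems(1) by (auto simp: xtail_def xhead_def)
  have IH: "xwalk G g b (rev es) (xhead G f e) \<and>
      walk_verts G g b (rev es) = rev (walk_verts G f (xhead G f e) es)"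
    using Cons by simp
  moreover have "xwalk G g (xhead G f e) [e] a" using Cons.prems(2) flip by simp
  ultimately have "xwalk G g b (rev es @ [e]) a" unfolding xwalk_append by blast
  moreover have "walk_verts G g b (rev es @ [e]) = rev (walk_verts G f a (e # es))"
    using IH flip Cons.prems(2) by (simp add: walk_verts_append walk_verts_Cons)
  ultimately show ?case by simp
qed simp

lemma xpath_cong:
  assumes "\<And>e. e \<in> set es \<Longrightarrow> f1 e = f2 e"
  shows "xpath G f1 a es b \<longleftrightarrow> xpath G f2 a es b"
proof -
  have "xwalk G f1 a es b = xwalk G f2 a es b" by (rule xwalk_cong) (rule assms)
  moreover have "walk_verts G f1 a es = walk_verts G f2 a es" by (rule walk_verts_cong) (rule assms)
  ultimately show ?thesis by (simp add: xpath_def)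
qed

lemma xpath_rev:
  assumes "\<And>e. e \<in> set es \<Longrightarrow> g e = (\<not> f e)" and "xpath G f a es b"
  shows "xpath G g b (rev es) a \<and> set (walk_verts G g b (rev es)) = set (walk_verts G f a es)"
proof -
  have "xwalk G f a es b" using assms(2) by (simp add: xpath_def)
  then have "xwalk G g b (rev es) a \<and> walk_verts G g b (rev es) = rev (walk_verts G f a es)"
    by (rule xwalk_rev[rotated]) (rule assms(1))
  then show ?thesis using assms(2) by (simp add: xpath_def)
qed

lemma xpath_loop_Nil: "xpath G f a es a \<Longrightarrow> es = []"
proof (rule ccontr)
  assume p: "xpath G f a es a" and ne: "es \<noteq> []"
  then have "last (map (xhead G f) es) = a"
    using xwalk_last_walk_verts[of G f a es a] by (simp add: xpath_def walk_verts_def)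
  then have "a \<in> set (map (xhead G f) es)" using ne by (metis last_in_set Nil_is_map_conv)
  then show False using p by (simp add: xpath_def walk_verts_def)
qed

lemma xpath_single_if_xtail_last:
  assumes "xpath G f a p b" "p \<noteq> []" "xtail G f (last p) = a"
  shows "p = [last p]"
proof -
  have "walk_verts G f a p ! (length p - 1) = walk_verts G f a p ! 0"
    using xwalk_xtail_last[of G f a p b] assms by (simp add: xpath_def)
  then have "length p - 1 = 0"
    using nth_eq_iff_index_eq[of "walk_verts G f a p" "length p - 1" 0] assms
    by (simp add: xpath_def)
  then show ?thesis using assms(2) by (cases p) auto
qed

lemma xpath_single_if_xhead_hd:
  assumes "xpath G f a p b" "p \<noteq> []" "xhead G f (hd p) = b"
  shows "p = [hd p]"
proof -
  have "walk_verts G f a p ! 1 = walk_verts G f a p ! length p"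
    using assms xwalk_walk_verts_nth_length[of G f a p b] walk_verts_nth_Suc[of 0 p G f a]
    by (simp add: xpath_def hd_conv_nth)
  then have "1 = length p"
    using nth_eq_iff_index_eq[of "walk_verts G f a p" 1 "length p"] assms
    by (cases p) (auto simp: xpath_def)
  then show ?thesis by (cases p) auto
qed

lemma xpath_suffix:
  assumes "xpath G f a (p1 @ e # p2) b"
  shows "xpath G f (xtail G f e) (e # p2) b"
proof -
  obtain c where c: "xwalk G f a p1 c" "xwalk G f c (e # p2) b"
    using assms xwalk_append unfolding xpath_def by metis
  have d: "distinct (walk_verts G f a p1 @ map (xhead G f) (e # p2))"
    using assms by (simp add: xpath_def walk_verts_append del: list.map)
  have "c \<in> set (walk_verts G f a p1)"
    using xwalk_last_walk_verts[OF c(1)] by (metis last_in_set length_walk_verts list.size(3) nat.distinct(1))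
  then have "c \<notin> set (map (xhead G f) (e # p2))" using d by auto
  moreover have "distinct (map (xhead G f) (e # p2))" using d by simp
  ultimately have "distinct (walk_verts G f c (e # p2))" by (simp add: walk_verts_def del: list.map)
  then show ?thesis using c by (simp add: xpath_def)
qed

definition walk_interior :: "('v, 'e) dgraph \<Rightarrow> ('e \<Rightarrow> bool) \<Rightarrow> 'v \<Rightarrow> 'e list \<Rightarrow> 'v \<Rightarrow> 'v set" where
  "walk_interior G f a es b = set (walk_verts G f a es) - {a, b}"

lemma inner_verts_eq_walk_interior:
  assumes p: "xpath G (\<lambda>_. False) a p b" and ne: "p \<noteq> []"
  shows "inner_verts G p = walk_interior G (\<lambda>_. False) a p b"
proof -
  define M where "M = map (head G) p"
  have wv: "walk_verts G (\<lambda>_. False) a p = a # M" by (simp add: M_def walk_verts_def xhead_def)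
  have "last M = b" using xwalk_last_walk_verts[of G "\<lambda>_. False" a p b] p ne wv
    by (simp add: xpath_def M_def)
  then have "M = butlast M @ [b]" using ne unfolding M_def by (metis append_butlast_last_id list.map_disc_iff)
  then have "walk_verts G (\<lambda>_. False) a p = a # butlast M @ [b]" using wv by simp
  moreover have "distinct (a # butlast M @ [b])" using p calculation by (simp add: xpath_def)
  ultimately show ?thesis by (auto simp: walk_interior_def inner_verts_def M_def)
qed

lemma xpath_orient:
  assumes p: "xpath G (\<lambda>_. False) a p b \<or> xpath G (\<lambda>_. False) b p a" and ab: "a \<noteq> b"
    and g: "\<And>e. e \<in> set p \<Longrightarrow> g e = (\<not> xpath G (\<lambda>_. False) a p b)"
  defines "p' \<equiv> if xpath G (\<lambda>_. False) a p b then p else rev p"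
  shows "xpath G g a p' b \<and> walk_interior G g a p' b = inner_verts G p \<and> set p' = set p"
proof (cases "xpath G (\<lambda>_. False) a p b")
  case True
  have "p \<noteq> []" using True ab by (auto simp: xpath_def)
  moreover have "walk_verts G g a p = walk_verts G (\<lambda>_. False) a p"
    by (rule walk_verts_cong) (simp add: g True)
  moreover have "xpath G g a p b \<longleftrightarrow> xpath G (\<lambda>_. False) a p b"
    by (rule xpath_cong) (simp add: g True)
  ultimately show ?thesis
    using True inner_verts_eq_walk_interior[OF True] by (simp add: p'_def walk_interior_def)
next
  case False
  then have ba: "xpath G (\<lambda>_. False) b p a" using p by simp
  have "p \<noteq> []" using ba ab by (auto simp: xpath_def)
  moreover have "xpath G g a (rev p) b \<and>
      set (walk_verts G g a (rev p)) = set (walk_verts G (\<lambda>_. False) b p)"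
    using xpath_rev[of p g "\<lambda>_. False", OF _ ba] g False by simp
  ultimately show ?thesis
    using False inner_verts_eq_walk_interior[OF ba] by (auto simp: p'_def walk_interior_def)
qed

lemma xpath_orient_disjoint:
  assumes P: "\<And>p. p \<in> P \<Longrightarrow> xpath G (\<lambda>_. False) a p b \<or> xpath G (\<lambda>_. False) b p a" and ab: "a \<noteq> b"
    and disj: "\<And>p q. \<lbrakk>p \<in> P; q \<in> P; p \<noteq> q\<rbrakk> \<Longrightarrow> set p \<inter> set q = {}"
    and g: "\<And>e. e \<in> \<Union> (set ` P) \<Longrightarrow> g e = (\<exists>q \<in> P. e \<in> set q \<and> \<not> xpath G (\<lambda>_. False) a q b)"
    and p: "p \<in> P"
  defines "p' \<equiv> if xpath G (\<lambda>_. False) a p b then p else rev p"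
  shows "xpath G g a p' b \<and> walk_interior G g a p' b = inner_verts G p \<and> set p' = set p"
  unfolding p'_def
proof (rule xpath_orient[OF P[OF p] ab])
  fix e assume e: "e \<in> set p"
  have "q = p" if "q \<in> P" "e \<in> set q" for q using disj[OF that(1) p] that(2) e by blast
  then show "g e = (\<not> xpath G (\<lambda>_. False) a p b)" using g[of e] e p by blast
qed

section \<open>Confluences, bags and width\<close>

lemma confluence_neq:
  assumes "confluence G f a b p q"
  shows "a \<noteq> b"
proof
  assume "a = b"
  then have "p = []" "q = []" using assms xpath_loop_Nil by (auto simp: confluence_def)
  then show False using assms by (simp add: confluence_def)
qed

lemma confluence_nonempty:
  assumes "confluence G f a b p q"
  shows "p \<noteq> []" "q \<noteq> []"
  using assms confluence_neq[OF assms] by (auto simp: confluence_def xpath_def)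

lemma confluence_last_neq:
  assumes c: "confluence G f a b p q"
  shows "last p \<noteq> last q"
proof
  assume eq: "last p = last q"
  have ne: "p \<noteq> []" "q \<noteq> []" using confluence_nonempty[OF c] by auto
  have pp: "xpath G f a p b" and qp: "xpath G f a q b" using c by (auto simp: confluence_def)
  define t where "t = xtail G f (last p)"
  have tp: "t = walk_verts G f a p ! (length p - 1)"
    using xwalk_xtail_last[of G f a p b] pp ne unfolding t_def by (simp add: xpath_def)
  have tq: "t = walk_verts G f a q ! (length q - 1)"
    using xwalk_xtail_last[of G f a q b] qp ne eq unfolding t_def by (simp add: xpath_def)
  have "t \<noteq> b"
    using tp pp ne xwalk_walk_verts_nth_length[of G f a p b]
      nth_eq_iff_index_eq[of "walk_verts G f a p" "length p - 1" "length p"]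
    by (cases p) (auto simp: xpath_def)
  moreover have "t \<in> set (walk_verts G f a p)" unfolding tp by (rule nth_mem) simp
  moreover have "t \<in> set (walk_verts G f a q)" unfolding tq by (rule nth_mem) simp
  ultimately have "t = a" using c unfolding confluence_def by blast
  then have "p = [last p]" "q = [last q]"
    using xpath_single_if_xtail_last[OF pp ne(1)] xpath_single_if_xtail_last[OF qp ne(2)] eq
    unfolding t_def by auto
  then have "p = q" using eq by metis
  then show False using c by (simp add: confluence_def)
qed

lemma confluence_hd_neq:
  assumes c: "confluence G f a b p q"
  shows "hd p \<noteq> hd q"
proof
  assume eq: "hd p = hd q"
  have ne: "p \<noteq> []" "q \<noteq> []" using confluence_nonempty[OF c] by auto
  have pp: "xpath G f a p b" and qp: "xpath G f a q b" using c by (auto simp: confluence_def)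
  define h where "h = xhead G f (hd p)"
  have hp: "h = walk_verts G f a p ! 1"
    using walk_verts_nth_Suc[of 0 p G f a] ne unfolding h_def by (simp add: hd_conv_nth)
  have hq: "h = walk_verts G f a q ! 1"
    using walk_verts_nth_Suc[of 0 q G f a] ne eq unfolding h_def by (simp add: hd_conv_nth)
  have "h \<noteq> a"
    using hp pp ne nth_eq_iff_index_eq[of "walk_verts G f a p" 1 0] by (simp add: xpath_def)
  moreover have "h \<in> set (walk_verts G f a p)" unfolding hp using ne by (intro nth_mem) simp
  moreover have "h \<in> set (walk_verts G f a q)" unfolding hq using ne by (intro nth_mem) simp
  ultimately have "h = b" using c unfolding confluence_def by blast
  then have "p = [hd p]" "q = [hd q]"
    using xpath_single_if_xhead_hd[OF pp ne(1)] xpath_single_if_xhead_hd[OF qp ne(2)] eq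
    unfolding h_def by auto
  then have "p = q" using eq by metis
  then show False using c by (simp add: confluence_def)
qed

lemma label_set_subset_verts: "wf_dgraph G \<Longrightarrow> label_set G f e \<subseteq> verts G"
proof
  fix b assume wf: "wf_dgraph G" and "b \<in> label_set G f e"
  then obtain a p q where c: "confluence G f a b p q" by (auto simp: label_set_def)
  then have "xwalk G f a p b" by (simp add: confluence_def xpath_def)
  then show "b \<in> verts G" using xwalk_ends_in_verts[OF wf] confluence_nonempty(1)[OF c] by blast
qed

lemma extraction_order_no_loop:
  assumes "is_extraction_order G f s" "e \<in> arcs G"
  shows "tail G e \<noteq> head G e"
proof
  assume "tail G e = head G e"
  then have "xwalk G f (tail G e) [e] (tail G e)" using assms(2) by (simp add: xtail_def xhead_def)
  then show False using assms(1) unfolding is_extraction_order_def by blast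
qed

lemma finite_bags: "wf_dgraph G \<Longrightarrow> finite (bags G f)"
proof -
  assume "wf_dgraph G"
  moreover have "bags G f \<subseteq> Pow (arcs G)" by (auto simp: bags_def out_arcs_def)
  ultimately show ?thesis by (meson finite_Pow_iff finite_subset wf_dgraph_def)
qed

lemma finite_bag_label_set: "wf_dgraph G \<Longrightarrow> finite (bag_label_set G f B)"
proof -
  assume wf: "wf_dgraph G"
  have "bag_label_set G f B \<subseteq> verts G"
    using label_set_subset_verts[OF wf] by (auto simp: bag_label_set_def)
  then show ?thesis using wf finite_subset by (auto simp: wf_dgraph_def)
qed

lemma xwidth_le_Suc_if_bags_covered:
  assumes wf: "wf_dgraph G" "wf_dgraph H"
    and cover: "\<And>B'. B' \<in> bags H g \<Longrightarrow>
      \<exists>B \<in> bags G f. bag_label_set H g B' \<subseteq> insert x (bag_label_set G f B)"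
  shows "xwidth H g \<le> xwidth G f + 1"
proof -
  define M where "M = Max (insert 0 ((\<lambda>B. card (bag_label_set G f B)) ` bags G f))"
  have "card (bag_label_set H g B') \<le> M + 1" if B': "B' \<in> bags H g" for B'
  proof -
    obtain B where B: "B \<in> bags G f" "bag_label_set H g B' \<subseteq> insert x (bag_label_set G f B)"
      using cover[OF B'] by blast
    have "card (bag_label_set H g B') \<le> card (insert x (bag_label_set G f B))"
      using B(2) finite_bag_label_set[OF wf(1)] by (intro card_mono) auto
    also have "\<dots> \<le> card (bag_label_set G f B) + 1"
      using finite_bag_label_set[OF wf(1)] by (simp add: card_insert_if)
    also have "card (bag_label_set G f B) \<le> M"
      unfolding M_def using finite_bags[OF wf(1)] B(1) by (intro Max_ge) auto
    finally show ?thesis by simp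
  qed
  then have "Max (insert 0 ((\<lambda>B. card (bag_label_set H g B)) ` bags H g)) \<le> M + 1"
    using finite_bags[OF wf(2)] by (subst Max_le_iff) auto
  then show ?thesis unfolding xwidth_def M_def by simp
qed

lemma ew_le_xwidth:
  assumes "is_extraction_order G f s"
  shows "ew G \<le> xwidth G f"
proof -
  have "ew G \<le> xwidth G (fst (f, s))"
    unfolding ew_def using assms by (intro cINF_lower) auto
  then show ?thesis by simp
qed

lemma ew_attained:
  assumes "\<exists>f s. is_extraction_order G f s"
  obtains f s where "is_extraction_order G f s" "ew G = xwidth G f"
proof -
  have "ew G \<in> (\<lambda>fs. xwidth G (fst fs)) ` {(f, s). is_extraction_order G f s}"
    unfolding ew_def using assms by (intro Inf_nat_def1) auto
  then show ?thesis using that by auto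
qed

lemma max_degree_pos:
  assumes wf: "wf_dgraph G" and e: "e \<in> arcs G"
  shows "1 \<le> max_degree G"
proof -
  have "e \<in> {e' \<in> arcs G. tail G e' = tail G e}" using e by simp
  moreover have "finite {e' \<in> arcs G. tail G e' = tail G e}" using wf by (simp add: wf_dgraph_def)
  ultimately have "0 < card {e' \<in> arcs G. tail G e' = tail G e}" using card_gt_0_iff by blast
  then have "1 \<le> degree G (tail G e)" by (simp add: degree_def)
  also have "\<dots> \<le> max_degree G"
    unfolding max_degree_def using wf e by (intro Max_ge) (auto simp: wf_dgraph_def)
  finally show ?thesis .
qed

section \<open>Extension by a bundle of parallel paths\<close>

locale parallel_path_extension =
  fixes G :: "('v, 'e) dgraph" and f :: "'e \<Rightarrow> bool" and s :: 'v
    and e0 :: 'e and I J :: 'v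
    and G' :: "('v, 'e) dgraph" and f' :: "'e \<Rightarrow> bool" and QS :: "'e list set"
  assumes wf: "wf_dgraph G" and wf': "wf_dgraph G'" and ext: "extends G' G"
    and eo: "is_extraction_order G f s"
    and e0: "e0 \<in> arcs G" and xtail_e0: "xtail G f e0 = I" and xhead_e0: "xhead G f e0 = J"
    and f'_old: "\<And>e. e \<in> arcs G \<Longrightarrow> f' e = f e"
    and bundle_xpath: "\<And>Q. Q \<in> QS \<Longrightarrow> xpath G' f' I Q J"
    and bundle_arcs_new: "\<And>Q. Q \<in> QS \<Longrightarrow> set Q \<inter> arcs G = {}"
    and bundle_interior_new: "\<And>Q. Q \<in> QS \<Longrightarrow> walk_interior G' f' I Q J \<inter> verts G = {}"
    and bundle_disjoint: "\<And>Q1 Q2. \<lbrakk>Q1 \<in> QS; Q2 \<in> QS; Q1 \<noteq> Q2\<rbrakk> \<Longrightarrow>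
        set Q1 \<inter> set Q2 = {} \<and> walk_interior G' f' I Q1 J \<inter> walk_interior G' f' I Q2 J = {}"
    and new_arcs: "arcs G' - arcs G \<subseteq> \<Union> (set ` QS)"
    and new_verts: "verts G' - verts G \<subseteq> (\<Union>Q \<in> QS. walk_interior G' f' I Q J)"
begin

abbreviation "wv Q \<equiv> walk_verts G' f' I Q"
abbreviation "inner Q \<equiv> walk_interior G' f' I Q J"

lemma old_xtail: "e \<in> arcs G \<Longrightarrow> xtail G' f' e = xtail G f e"
  using ext f'_old by (auto simp: extends_def xtail_def)

lemma old_xhead: "e \<in> arcs G \<Longrightarrow> xhead G' f' e = xhead G f e"
  using ext f'_old by (auto simp: extends_def xhead_def)

lemma old_xtail_in_verts: "e \<in> arcs G \<Longrightarrow> xtail G' f' e \<in> verts G"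
  using old_xtail wf xtail_in_verts by metis

lemma old_xhead_in_verts: "e \<in> arcs G \<Longrightarrow> xhead G' f' e \<in> verts G"
  using old_xhead wf xhead_in_verts by metis

lemma I_in_verts: "I \<in> verts G" and J_in_verts: "J \<in> verts G"
  using wf e0 xtail_e0 xhead_e0 xtail_in_verts xhead_in_verts by metis+

lemma I_neq_J: "I \<noteq> J"
  using extraction_order_no_loop[OF eo e0] xtail_e0 xhead_e0
  by (auto simp: xtail_def xhead_def split: if_splits)

lemma xwalk_lift:
  "xwalk G f a es b \<Longrightarrow> xwalk G' f' a es b \<and> walk_verts G' f' a es = walk_verts G f a es"
proof (induction es arbitrary: a)
  case (Cons e es)
  then show ?case using old_xtail old_xhead ext by (auto simp: walk_verts_Cons extends_def)
qed simp

lemma bundle_xwalk: "Q \<in> QS \<Longrightarrow> xwalk G' f' I Q J"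
  using bundle_xpath by (simp add: xpath_def)

lemma bundle_distinct: "Q \<in> QS \<Longrightarrow> distinct (wv Q)"
  using bundle_xpath by (simp add: xpath_def)

lemma bundle_nonempty: "Q \<in> QS \<Longrightarrow> Q \<noteq> []"
  using bundle_xwalk I_neq_J by fastforce

lemma bundle_nth_length: "Q \<in> QS \<Longrightarrow> wv Q ! length Q = J"
  using bundle_xwalk xwalk_walk_verts_nth_length by metis

lemma bundle_xtail_nth: "Q \<in> QS \<Longrightarrow> m < length Q \<Longrightarrow> xtail G' f' (Q ! m) = wv Q ! m"
  using bundle_xwalk xwalk_xtail_nth by metis

lemma bundle_nth_inner:
  assumes Q: "Q \<in> QS" and n: "0 < n" "n < length Q"
  shows "wv Q ! n \<in> inner Q"
proof -
  have "wv Q ! n \<noteq> wv Q ! 0" "wv Q ! n \<noteq> wv Q ! length Q"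
    using nth_eq_iff_index_eq[OF bundle_distinct[OF Q], of n 0]
      nth_eq_iff_index_eq[OF bundle_distinct[OF Q], of n "length Q"] n by auto
  then show ?thesis using bundle_nth_length[OF Q] n by (auto simp: walk_interior_def)
qed

lemma bundle_nth_not_old: "Q \<in> QS \<Longrightarrow> 0 < n \<Longrightarrow> n < length Q \<Longrightarrow> wv Q ! n \<notin> verts G"
  using bundle_nth_inner bundle_interior_new by blast

lemma bundle_inner_nth:
  assumes Q: "Q \<in> QS" and v: "v \<in> inner Q"
  obtains n where "0 < n" "n < length Q" "v = wv Q ! n"
proof -
  obtain n where n: "n < Suc (length Q)" "v = wv Q ! n"
    using v by (auto simp: walk_interior_def in_set_conv_nth)
  moreover have "n \<noteq> 0" using n v by (cases n) (auto simp: walk_interior_def)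
  moreover have "n \<noteq> length Q" using n v bundle_nth_length[OF Q] by (auto simp: walk_interior_def)
  ultimately show ?thesis using that by simp
qed

lemma new_arc_in_bundle:
  assumes "e \<in> arcs G'" "e \<notin> arcs G"
  obtains Q m where "Q \<in> QS" "m < length Q" "e = Q ! m"
  using assms new_arcs by (metis DiffI UN_E in_set_conv_nth subsetD)

lemma new_vert_in_bundle:
  assumes "v \<in> verts G'" "v \<notin> verts G"
  obtains Q n where "Q \<in> QS" "0 < n" "n < length Q" "v = wv Q ! n"
  using assms new_verts bundle_inner_nth by blast

lemma out_arc_of_inner:
  assumes Q: "Q \<in> QS" and n: "0 < n" "n < length Q"
    and e: "e \<in> arcs G'" "xtail G' f' e = wv Q ! n"
  shows "e = Q ! n"
proof -
  have "e \<notin> arcs G" using e bundle_nth_not_old[OF Q n] old_xtail_in_verts by metis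
  then obtain Q' m where Q': "Q' \<in> QS" "m < length Q'" "e = Q' ! m"
    using new_arc_in_bundle e(1) by blast
  have t: "xtail G' f' e = wv Q' ! m" using bundle_xtail_nth Q' by simp
  have "m \<noteq> 0"
  proof
    assume "m = 0"
    then show False using t e bundle_nth_not_old[OF Q n] I_in_verts by simp
  qed
  then have "wv Q' ! m \<in> inner Q'" using bundle_nth_inner[OF Q'(1)] Q'(2) by simp
  moreover have "wv Q ! n \<in> inner Q" using bundle_nth_inner[OF Q n] .
  ultimately have "Q' = Q" using bundle_disjoint[OF Q'(1) Q] t e by auto
  then have "m = n" using t e bundle_distinct[OF Q] n Q' by (simp add: nth_eq_iff_index_eq)
  then show ?thesis using Q' \<open>Q' = Q\<close> by simp
qed

lemma in_arc_of_inner: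
  assumes Q: "Q \<in> QS" and n: "0 < n" "n < length Q"
    and e: "e \<in> arcs G'" "xhead G' f' e = wv Q ! n"
  shows "e = Q ! (n - 1)"
proof -
  have "e \<notin> arcs G" using e bundle_nth_not_old[OF Q n] old_xhead_in_verts by metis
  then obtain Q' m where Q': "Q' \<in> QS" "m < length Q'" "e = Q' ! m"
    using new_arc_in_bundle e(1) by blast
  have h: "xhead G' f' e = wv Q' ! Suc m" using walk_verts_nth_Suc[OF Q'(2), of G' f' I] Q'(3) by simp
  have "Suc m \<noteq> length Q'"
    using h e bundle_nth_not_old[OF Q n] J_in_verts bundle_nth_length[OF Q'(1)] by auto
  then have "wv Q' ! Suc m \<in> inner Q'" using bundle_nth_inner[OF Q'(1)] Q'(2) by simp
  moreover have "wv Q ! n \<in> inner Q" using bundle_nth_inner[OF Q n] .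
  ultimately have "Q' = Q" using bundle_disjoint[OF Q'(1) Q] h e by auto
  then have "Suc m = n" using h e bundle_distinct[OF Q] n Q' by (simp add: nth_eq_iff_index_eq)
  then show ?thesis using Q' \<open>Q' = Q\<close> by auto
qed

lemma xwalk_from_bundle_vert:
  assumes Q: "Q \<in> QS"
  shows "\<lbrakk>xwalk G' f' (wv Q ! n) es b; 0 < n; n \<le> length Q\<rbrakk> \<Longrightarrow>
    (\<exists>m. n \<le> m \<and> m < length Q \<and> b = wv Q ! m \<and> es = take (m - n) (drop n Q)) \<or>
    (\<exists>rest. es = drop n Q @ rest \<and> xwalk G' f' J rest b)"
proof (induction es arbitrary: n)
  case Nil
  show ?case
  proof (cases "n < length Q")
    case True
    then show ?thesis using Nil by (intro disjI1 exI[of _ n]) auto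
  next
    case False
    then show ?thesis using Nil bundle_nth_length[OF Q] by auto
  qed
next
  case (Cons e es)
  show ?case
  proof (cases "n < length Q")
    case False
    then show ?thesis using Cons.prems bundle_nth_length[OF Q] by auto
  next
    case True
    have e: "e = Q ! n" using out_arc_of_inner[OF Q Cons.prems(2) True] Cons.prems(1) by auto
    have dr: "drop n Q = e # drop (Suc n) Q" using True e by (simp add: Cons_nth_drop_Suc)
    have "wv Q ! Suc n = xhead G' f' e" using walk_verts_nth_Suc[OF True, of G' f' I] e by simp
    then have "xwalk G' f' (wv Q ! Suc n) es b" using Cons.prems(1) by simp
    with Cons.IH[of "Suc n"] True consider
        m where "Suc n \<le> m" "m < length Q" "b = wv Q ! m" "es = take (m - Suc n) (drop (Suc n) Q)"
      | rest where "es = drop (Suc n) Q @ rest" "xwalk G' f' J rest b"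
      by auto
    then show ?thesis
    proof cases
      case (1 m)
      then have "m - n = Suc (m - Suc n)" by simp
      then have "e # es = take (m - n) (drop n Q)" using dr 1 by simp
      then show ?thesis using 1 by (intro disjI1 exI[of _ m]) auto
    next
      case (2 rest)
      then show ?thesis using dr by auto
    qed
  qed
qed

lemma xwalk_between_old_cases:
  assumes w: "xwalk G' f' a (e # es) b" and a: "a \<in> verts G" and b: "b \<in> verts G"
  shows "e \<in> arcs G \<or> (\<exists>Q \<in> QS. \<exists>rest. a = I \<and> e # es = Q @ rest \<and> xwalk G' f' J rest b)"
proof (cases "e \<in> arcs G")
  case False
  then obtain Q m where Q: "Q \<in> QS" "m < length Q" "e = Q ! m"
    using new_arc_in_bundle w by auto
  have "xtail G' f' e = wv Q ! m" using bundle_xtail_nth Q by simp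
  then have m: "m = 0" using bundle_nth_not_old[OF Q(1)] Q(2) a w by (metis gr0I xwalk.simps(2))
  then have aI: "a = I" using bundle_xtail_nth[OF Q(1,2)] Q(3) w by simp
  have "wv Q ! 1 = xhead G' f' e" using walk_verts_nth_Suc[OF Q(2), of G' f' I] Q(3) m by simp
  then have "xwalk G' f' (wv Q ! 1) es b" using w by simp
  with xwalk_from_bundle_vert[OF Q(1), of 1 es b] Q(2) m consider
      m' where "1 \<le> m'" "m' < length Q" "b = wv Q ! m'"
    | rest where "es = drop 1 Q @ rest" "xwalk G' f' J rest b"
    by auto
  then show ?thesis
  proof cases
    case 1
    then show ?thesis using bundle_nth_not_old[OF Q(1)] b by auto
  next
    case (2 rest)
    then have "e # es = Q @ rest" using Q m by (cases Q) (simp_all add: drop_Suc)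
    then show ?thesis using Q(1) aI 2 by blast
  qed
qed simp


text \<open>Contracting every bundle path onto \<open>e0\<close>: its first arc becomes \<open>e0\<close>, its later arcs are
  dropped.\<close>

definition collapse_arc :: "'e \<Rightarrow> 'e" where
  "collapse_arc e = (if e \<in> arcs G then e else e0)"

definition collapse :: "'e list \<Rightarrow> 'e list" where
  "collapse es = map collapse_arc (filter (\<lambda>e. e \<in> arcs G \<or> xtail G' f' e = I) es)"

lemma collapse_Nil [simp]: "collapse [] = []"
  by (simp add: collapse_def)

lemma collapse_append: "collapse (xs @ ys) = collapse xs @ collapse ys"
  by (simp add: collapse_def)

lemma collapse_old_Cons: "e \<in> arcs G \<Longrightarrow> collapse (e # es) = e # collapse es"
  by (simp add: collapse_def collapse_arc_def)

lemma collapse_old: "set es \<subseteq> arcs G \<Longrightarrow> collapse es = es"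
  by (induction es) (simp_all add: collapse_old_Cons)

lemma collapse_bundle:
  assumes Q: "Q \<in> QS"
  shows "collapse Q = [e0]"
proof -
  obtain e r where Qe: "Q = e # r" using bundle_nonempty[OF Q] by (cases Q) auto
  have "\<not> (x \<in> arcs G \<or> xtail G' f' x = I)" if x: "x \<in> set r" for x
  proof -
    obtain m where m: "m < length r" "x = r ! m" using x by (auto simp: in_set_conv_nth)
    then have "xtail G' f' x = wv Q ! Suc m" using bundle_xtail_nth[OF Q, of "Suc m"] Qe by simp
    moreover have "wv Q ! Suc m \<notin> verts G" using bundle_nth_not_old[OF Q, of "Suc m"] Qe m by simp
    moreover have "x \<notin> arcs G" using bundle_arcs_new[OF Q] Qe x by auto
    ultimately show ?thesis using I_in_verts by auto
  qed
  moreover have "xtail G' f' e = I" "e \<notin> arcs G"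
    using bundle_xtail_nth[OF Q, of 0] bundle_arcs_new[OF Q] Qe by auto
  ultimately show ?thesis using Qe by (simp add: collapse_def collapse_arc_def filter_empty_conv)
qed

lemma bundle_old_verts:
  assumes Q: "Q \<in> QS"
  shows "filter (\<lambda>v. v \<in> verts G) (wv Q) = [I, J]"
proof -
  have "v \<notin> verts G" if v: "v \<in> set (butlast (map (xhead G' f') Q))" for v
  proof -
    obtain n where n: "n < length (butlast (map (xhead G' f') Q))"
        "v = butlast (map (xhead G' f') Q) ! n"
      using v by (auto simp: in_set_conv_nth)
    then have "n < length Q - 1" "v = map (xhead G' f') Q ! n" by (simp_all add: nth_butlast)
    then show ?thesis
      using bundle_nth_not_old[OF Q, of "Suc n"] walk_verts_nth_Suc[of n Q G' f' I] by simp
  qed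
  moreover have "map (xhead G' f') Q = butlast (map (xhead G' f') Q) @ [J]"
    using xwalk_xhead_last[OF bundle_xwalk[OF Q] bundle_nonempty[OF Q]] bundle_nonempty[OF Q]
    by (metis append_butlast_last_id last_map list.map_disc_iff)
  ultimately have "filter (\<lambda>v. v \<in> verts G) (map (xhead G' f') Q) = [J]"
    using J_in_verts by (metis filter.simps filter_False filter_append self_append_conv2)
  then show ?thesis using I_in_verts by (simp add: walk_verts_def)
qed

lemma collapse_xwalk:
  "xwalk G' f' a es b \<Longrightarrow> a \<in> verts G \<Longrightarrow> b \<in> verts G \<Longrightarrow>
    xwalk G f a (collapse es) b \<and>
    walk_verts G f a (collapse es) = filter (\<lambda>v. v \<in> verts G) (walk_verts G' f' a es) \<and>
    (\<forall>e \<in> set es. collapse_arc e \<in> set (collapse es))"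
proof (induction es arbitrary: a rule: length_induct)
  case (1 es)
  show ?case
  proof (cases es)
    case (Cons e es')
    from xwalk_between_old_cases[of a e es' b] "1.prems" Cons consider
        "e \<in> arcs G"
      | Q rest where "Q \<in> QS" "a = I" "es = Q @ rest" "xwalk G' f' J rest b"
      by auto
    then show ?thesis
    proof cases
      case 1
      then have e: "xtail G f e = a" "xhead G f e = xhead G' f' e" "xhead G' f' e \<in> verts G"
        using old_xtail old_xhead old_xhead_in_verts "1.prems"(1) Cons by auto
      have "xwalk G' f' (xhead G' f' e) es' b" using "1.prems"(1) Cons by simp
      then have IH: "xwalk G f (xhead G' f' e) (collapse es') b \<and>
          walk_verts G f (xhead G' f' e) (collapse es') =
            filter (\<lambda>v. v \<in> verts G) (walk_verts G' f' (xhead G' f' e) es') \<and>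
          (\<forall>e \<in> set es'. collapse_arc e \<in> set (collapse es'))"
        using "1.IH" Cons e(3) "1.prems"(3) by auto
      then show ?thesis
        using 1 e Cons "1.prems"(2) by (auto simp: collapse_old_Cons walk_verts_Cons collapse_arc_def)
    next
      case (2 Q rest)
      have "length rest < length es" using 2 bundle_nonempty by simp
      then have IH: "xwalk G f J (collapse rest) b \<and>
          walk_verts G f J (collapse rest) = filter (\<lambda>v. v \<in> verts G) (walk_verts G' f' J rest) \<and>
          (\<forall>e \<in> set rest. collapse_arc e \<in> set (collapse rest))"
        using "1.IH" 2 J_in_verts "1.prems"(3) by blast
      have c: "collapse es = e0 # collapse rest" using 2 collapse_bundle by (simp add: collapse_append)
      have "walk_verts G f a (collapse es) = I # J # filter (\<lambda>v. v \<in> verts G) (map (xhead G' f') rest)"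
        using c IH 2 xhead_e0 J_in_verts by (simp add: walk_verts_Cons walk_verts_def)
      also have "\<dots> = filter (\<lambda>v. v \<in> verts G) (walk_verts G' f' a es)"
        using 2 bundle_old_verts by (simp add: walk_verts_append)
      finally show ?thesis
        using c IH 2 e0 xtail_e0 xhead_e0 bundle_arcs_new
        by (auto simp: collapse_arc_def)
    qed
  qed (use "1.prems" in simp)
qed


lemma confluence_ends_old:
  assumes c: "confluence G' f' a b p q"
  shows "a \<in> verts G" "b \<in> verts G"
proof -
  have ne: "p \<noteq> []" "q \<noteq> []" using confluence_nonempty[OF c] by auto
  have pw: "xwalk G' f' a p b" and qw: "xwalk G' f' a q b"
    using c by (auto simp: confluence_def xpath_def)
  have ab: "a \<in> verts G'" "b \<in> verts G'" using xwalk_ends_in_verts[OF wf' pw ne(1)] by auto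
  show "a \<in> verts G"
  proof (rule ccontr)
    assume "a \<notin> verts G"
    then obtain Q n where Q: "Q \<in> QS" "0 < n" "n < length Q" "a = wv Q ! n"
      using new_vert_in_bundle ab(1) by blast
    have "hd p = Q ! n" "hd q = Q ! n"
      using out_arc_of_inner[OF Q(1-3)] xwalk_xtail_hd[OF pw ne(1)] xwalk_xtail_hd[OF qw ne(2)]
        xwalk_arcs[OF pw] xwalk_arcs[OF qw] ne Q(4) by (metis hd_in_set subsetD)+
    then show False using confluence_hd_neq[OF c] by simp
  qed
  show "b \<in> verts G"
  proof (rule ccontr)
    assume "b \<notin> verts G"
    then obtain Q n where Q: "Q \<in> QS" "0 < n" "n < length Q" "b = wv Q ! n"
      using new_vert_in_bundle ab(2) by blast
    have "last p = Q ! (n - 1)" "last q = Q ! (n - 1)"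
      using in_arc_of_inner[OF Q(1-3)] xwalk_xhead_last[OF pw ne(1)] xwalk_xhead_last[OF qw ne(2)]
        xwalk_arcs[OF pw] xwalk_arcs[OF qw] ne Q(4) by (metis last_in_set subsetD)+
    then show False using confluence_last_neq[OF c] by simp
  qed
qed

lemma collapse_confluence_arcs:
  assumes c: "confluence G' f' a b p q" and e: "e \<in> set p \<union> set q"
  shows "collapse_arc e \<in> set (collapse p) \<union> set (collapse q)"
  using collapse_xwalk confluence_ends_old[OF c] c e by (auto simp: confluence_def xpath_def)

lemma collapse_xpath:
  assumes p: "xpath G' f' a p b" and ab: "a \<in> verts G" "b \<in> verts G"
  shows "xpath G f a (collapse p) b"
    and "set (walk_verts G f a (collapse p)) \<subseteq> set (walk_verts G' f' a p)"
  using collapse_xwalk[OF _ ab, of p] p by (auto simp: xpath_def)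

lemma collapse_eq_if_confluence:
  assumes c: "confluence G' f' a b p q" and eq: "collapse p = collapse q"
  shows "a = I \<and> b = J \<and> collapse p = [e0]"
proof -
  have ab: "a \<in> verts G" "b \<in> verts G" using confluence_ends_old[OF c] by auto
  have pp: "xpath G' f' a p b" and qp: "xpath G' f' a q b"
    using c by (auto simp: confluence_def)
  note cp = collapse_xpath[OF pp ab] and cq = collapse_xpath[OF qp ab]
  have "distinct (walk_verts G f a (collapse p))" using cp(1) by (simp add: xpath_def)
  then have "length (walk_verts G f a (collapse p)) = card (set (walk_verts G f a (collapse p)))"
    by (simp add: distinct_card)
  also have "\<dots> \<le> card {a, b}"
    using cp(2) cq(2) eq c by (intro card_mono) (auto simp: confluence_def)
  also have "\<dots> \<le> 2" by (simp add: card_insert_if)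
  finally have "length (walk_verts G f a (collapse p)) \<le> 2" .
  moreover have "collapse_arc (hd p) \<in> set (collapse p)"
    using collapse_confluence_arcs[OF c, of "hd p"] confluence_nonempty[OF c] eq by auto
  ultimately obtain x where x: "collapse p = [x]" by (cases "collapse p") auto
  have "x = e0"
  proof (rule ccontr)
    assume "x \<noteq> e0"
    have "r = [x]" if r: "r \<in> {p, q}" for r
    proof -
      have "collapse_arc e = x" if "e \<in> set r" for e
        using collapse_confluence_arcs[OF c, of e] r that x eq by auto
      then have "set r \<subseteq> arcs G" using \<open>x \<noteq> e0\<close> unfolding collapse_arc_def by (metis subsetI)
      then show ?thesis using collapse_old r x eq by auto
    qed
    then show False using c by (auto simp: confluence_def)
  qed
  then show ?thesis using cp(1) x xtail_e0 xhead_e0 by (auto simp: xpath_def)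
qed

lemma collapse_confluence:
  assumes c: "confluence G' f' a b p q"
  shows "confluence G f a b (collapse p) (collapse q) \<or>
    (a = I \<and> b = J \<and> collapse p = [e0] \<and> collapse q = [e0])"
proof (cases "collapse p = collapse q")
  case False
  have ab: "a \<in> verts G" "b \<in> verts G" using confluence_ends_old[OF c] by auto
  have "xpath G' f' a p b" "xpath G' f' a q b" using c by (auto simp: confluence_def)
  then show ?thesis
    using False c collapse_xpath[OF _ ab, of p] collapse_xpath[OF _ ab, of q]
    by (auto simp: confluence_def)
qed (use collapse_eq_if_confluence[OF c] in simp)

lemma label_set_collapse:
  assumes "b \<in> label_set G' f' e"
  shows "b \<in> label_set G f (collapse_arc e) \<or> (b = J \<and> collapse_arc e = e0)"
proof -
  obtain a p q where c: "confluence G' f' a b p q" "e \<in> set p \<union> set q"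
    using assms by (auto simp: label_set_def)
  have "collapse_arc e \<in> set (collapse p) \<union> set (collapse q)"
    using collapse_confluence_arcs[OF c] .
  then show ?thesis using collapse_confluence[OF c(1)] by (auto simp: label_set_def)
qed

text \<open>Every path ending in \<open>J\<close> that leaves \<open>I\<close> along an arc other than \<open>e0\<close> forms a confluence
  from \<open>I\<close> to \<open>J\<close> together with \<open>e0\<close>.\<close>

lemma label_J_e0:
  assumes e: "xtail G f e = I" "J \<in> label_set G f e"
  shows "J \<in> label_set G f e0"
proof (cases "e = e0")
  case False
  obtain a p q where c: "confluence G f a J p q" "e \<in> set p \<union> set q"
    using e by (auto simp: label_set_def)
  then obtain r where r: "xpath G f a r J" "e \<in> set r" by (auto simp: confluence_def)
  then obtain r1 r2 where "r = r1 @ e # r2" by (meson split_list)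
  then have "xpath G f I (e # r2) J" using xpath_suffix r e by metis
  moreover have "xpath G f I [e0] J" using e0 xtail_e0 xhead_e0 I_neq_J by (simp add: xpath_def walk_verts_def)
  ultimately have "confluence G f I J [e0] (e # r2)"
    using False xhead_e0 by (auto simp: confluence_def walk_verts_def)
  then show ?thesis by (force simp: label_set_def)
qed (use e in simp)


lemma extension_reachable:
  assumes v: "v \<in> verts G'"
  shows "\<exists>es. xwalk G' f' s es v"
proof -
  have old: "\<exists>es. xwalk G' f' s es u" if "u \<in> verts G" for u
    using eo that xwalk_lift unfolding is_extraction_order_def by metis
  show ?thesis
  proof (cases "v \<in> verts G")
    case False
    then obtain Q n where Q: "Q \<in> QS" "0 < n" "n < length Q" "v = wv Q ! n"
      using new_vert_in_bundle v by blast
    obtain es where "xwalk G' f' s es I" using old I_in_verts by blast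
    moreover have "xwalk G' f' I (take n Q) v" using xwalk_take[OF bundle_xwalk[OF Q(1)], of n] Q by simp
    ultimately show ?thesis using xwalk_append by metis
  qed (use old in blast)
qed

lemma collapse_cycle:
  assumes "xwalk G' f' v es v" "es \<noteq> []" "v \<in> verts G"
  shows False
proof -
  have "xwalk G f v (collapse es) v" "collapse_arc (hd es) \<in> set (collapse es)"
    using collapse_xwalk[OF assms(1,3,3)] assms(2) by auto
  then show False using eo unfolding is_extraction_order_def by (metis empty_iff list.set(1))
qed

lemma extension_acyclic:
  assumes w: "xwalk G' f' v es v" and ne: "es \<noteq> []"
  shows False
proof (cases "v \<in> verts G")
  case False
  have "v \<in> verts G'" using xwalk_ends_in_verts[OF wf' w ne] by simp
  then obtain Q n where Q: "Q \<in> QS" "0 < n" "n < length Q" "v = wv Q ! n"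
    using new_vert_in_bundle False by blast
  from xwalk_from_bundle_vert[OF Q(1), of n es v] w Q consider
      m where "n \<le> m" "m < length Q" "wv Q ! n = wv Q ! m" "es = take (m - n) (drop n Q)"
    | rest where "es = drop n Q @ rest" "xwalk G' f' J rest v"
    by auto
  then show False
  proof cases
    case (1 m)
    then have "m = n" using bundle_distinct[OF Q(1)] Q by (simp add: nth_eq_iff_index_eq)
    then show False using 1 ne by simp
  next
    case (2 rest)
    have "xwalk G' f' I (take n Q @ drop n Q) J" using bundle_xwalk[OF Q(1)] by simp
    moreover have "xwalk G' f' I (take n Q) v" using xwalk_take[OF bundle_xwalk[OF Q(1)], of n] Q by simp
    ultimately have "xwalk G' f' v (drop n Q) J" using xwalk_append xwalk_end_unique by metis
    then have "xwalk G' f' J (rest @ drop n Q) J" using 2 xwalk_append by metis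
    moreover have "rest @ drop n Q \<noteq> []" using Q(3) by simp
    ultimately show False using collapse_cycle J_in_verts by blast
  qed
qed (use collapse_cycle w ne in blast)

lemma extraction_order_extension: "is_extraction_order G' f' s"
proof -
  have "s \<in> verts G'" using eo ext by (auto simp: is_extraction_order_def extends_def)
  then show ?thesis
    using extension_reachable extension_acyclic unfolding is_extraction_order_def by blast
qed


lemma collapse_out_arc:
  assumes v: "v \<in> verts G" and e: "e \<in> out_arcs G' f' v"
  shows "collapse_arc e \<in> out_arcs G f v"
proof (cases "e \<in> arcs G")
  case True
  then show ?thesis using e old_xtail by (simp add: out_arcs_def collapse_arc_def)
next
  case False
  obtain Q m where Q: "Q \<in> QS" "m < length Q" "e = Q ! m"
    using new_arc_in_bundle False e by (auto simp: out_arcs_def)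
  have "wv Q ! m = v" using bundle_xtail_nth[OF Q(1,2)] Q(3) e by (simp add: out_arcs_def)
  then have "m = 0" using bundle_nth_not_old[OF Q(1)] Q(2) v by (metis gr0I)
  then have "v = I" using \<open>wv Q ! m = v\<close> by simp
  then show ?thesis using False e0 xtail_e0 by (simp add: out_arcs_def collapse_arc_def)
qed

lemma bag_rel_collapse:
  assumes v: "v \<in> verts G" and r: "bag_rel G' f' v e e'"
  shows "collapse_arc e = collapse_arc e' \<or> bag_rel G f v (collapse_arc e) (collapse_arc e')"
proof -
  have out: "collapse_arc e \<in> out_arcs G f v" "collapse_arc e' \<in> out_arcs G f v"
    using r collapse_out_arc v by (auto simp: bag_rel_def)
  obtain b where "b \<in> label_set G' f' e" "b \<in> label_set G' f' e'"
    using r by (auto simp: bag_rel_def)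
  then have b: "b \<in> label_set G f (collapse_arc e) \<or> (b = J \<and> collapse_arc e = e0)"
      "b \<in> label_set G f (collapse_arc e') \<or> (b = J \<and> collapse_arc e' = e0)"
    using label_set_collapse by auto
  have "J \<in> label_set G f e0" if "x \<in> out_arcs G f v" "e0 \<in> out_arcs G f v" "J \<in> label_set G f x" for x
    using label_J_e0[of x] that xtail_e0 by (simp add: out_arcs_def)
  then have "label_set G f (collapse_arc e) \<inter> label_set G f (collapse_arc e') \<noteq> {}
      \<or> collapse_arc e = collapse_arc e'"
    using b out by fastforce
  then show ?thesis using out by (auto simp: bag_rel_def)
qed

lemma bag_rel_rtranclp_collapse:
  assumes v: "v \<in> verts G"
  shows "(bag_rel G' f' v)\<^sup>*\<^sup>* e x \<Longrightarrow> (bag_rel G f v)\<^sup>*\<^sup>* (collapse_arc e) (collapse_arc x)"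
proof (induction rule: rtranclp_induct)
  case (step y z)
  then show ?case using bag_rel_collapse[OF v step(2)] by (auto intro: rtranclp.rtrancl_into_rtrancl)
qed simp

lemma bag_label_set_extension:
  assumes B': "B' \<in> bags G' f'"
  shows "\<exists>B \<in> bags G f. bag_label_set G' f' B' \<subseteq> insert J (bag_label_set G f B)"
proof -
  obtain v e where ve: "v \<in> verts G'" "e \<in> out_arcs G' f' v"
    "B' = {x \<in> out_arcs G' f' v. (bag_rel G' f' v)\<^sup>*\<^sup>* e x}"
    using B' by (auto simp: bags_def)
  have labels: "label_set G' f' x \<subseteq> insert J (label_set G f (collapse_arc x))" for x
    using label_set_collapse by blast
  show ?thesis
  proof (cases "v \<in> verts G")
    case True
    define B where "B = {y \<in> out_arcs G f v. (bag_rel G f v)\<^sup>*\<^sup>* (collapse_arc e) y}"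
    have "B \<in> bags G f" using True collapse_out_arc[OF True ve(2)] unfolding B_def bags_def by blast
    moreover have "collapse_arc x \<in> B" if "x \<in> B'" for x
      using that ve collapse_out_arc[OF True] bag_rel_rtranclp_collapse[OF True] unfolding B_def by auto
    ultimately show ?thesis using labels unfolding bag_label_set_def by blast
  next
    case False
    define B where "B = {y \<in> out_arcs G f I. (bag_rel G f I)\<^sup>*\<^sup>* e0 y}"
    have e0_out: "e0 \<in> out_arcs G f I" using e0 xtail_e0 by (simp add: out_arcs_def)
    then have B: "B \<in> bags G f" "e0 \<in> B" using I_in_verts unfolding B_def bags_def by auto
    have "collapse_arc x = e0" if x: "x \<in> B'" for x
    proof -
      have "x \<notin> arcs G"
      proof
        assume "x \<in> arcs G"
        then have "xtail G' f' x \<in> verts G" by (rule old_xtail_in_verts)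
        then show False using x ve False by (simp add: out_arcs_def)
      qed
      then show ?thesis by (simp add: collapse_arc_def)
    qed
    then have "bag_label_set G' f' B' \<subseteq> insert J (label_set G f e0)"
      unfolding bag_label_set_def using labels by (intro UN_least) metis
    also have "\<dots> \<subseteq> insert J (bag_label_set G f B)"
      using B(2) by (auto simp: bag_label_set_def)
    finally show ?thesis using B(1) by blast
  qed
qed

lemma ew_extension_le: "ew G' \<le> xwidth G f + 1"
proof -
  have "ew G' \<le> xwidth G' f'" using ew_le_xwidth[OF extraction_order_extension] .
  also have "\<dots> \<le> xwidth G f + 1"
    by (rule xwidth_le_Suc_if_bags_covered[OF wf wf' bag_label_set_extension])
  finally show ?thesis .
qed

end

section \<open>Adding parallel edges or paths\<close>

lemma reorient_parallel_paths:
  assumes ij: "i \<noteq> j" and e0: "tail G e0 = i" "head G e0 = j"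
    and P_xpath: "\<And>p. p \<in> P \<Longrightarrow> xpath G' (\<lambda>_. False) i p j \<or> xpath G' (\<lambda>_. False) j p i"
    and P_arcs_new: "\<And>p. p \<in> P \<Longrightarrow> set p \<inter> arcs G = {}"
    and P_disjoint: "\<And>p q. \<lbrakk>p \<in> P; q \<in> P; p \<noteq> q\<rbrakk> \<Longrightarrow> set p \<inter> set q = {}"
  obtains f' orient where "\<And>e. e \<in> arcs G \<Longrightarrow> f' e = f e"
    and "\<And>p. p \<in> P \<Longrightarrow> xpath G' f' (xtail G f e0) (orient p) (xhead G f e0) \<and>
      walk_interior G' f' (xtail G f e0) (orient p) (xhead G f e0) = inner_verts G' p \<and>
      set (orient p) = set p"
proof -
  let ?I = "xtail G f e0" and ?J = "xhead G f e0"
  have IJ: "?I \<noteq> ?J" "?I = i \<and> ?J = j \<or> ?I = j \<and> ?J = i"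
    using ij e0 by (auto simp: xtail_def xhead_def)
  define f' where "f' e = (if e \<in> arcs G then f e
      else (\<exists>q \<in> P. e \<in> set q \<and> \<not> xpath G' (\<lambda>_. False) ?I q ?J))" for e
  define orient where "orient p = (if xpath G' (\<lambda>_. False) ?I p ?J then p else rev p)" for p
  have orient: "xpath G' f' ?I (orient p) ?J \<and> walk_interior G' f' ?I (orient p) ?J = inner_verts G' p \<and>
      set (orient p) = set p" if p: "p \<in> P" for p
    unfolding orient_def
  proof (rule xpath_orient_disjoint[OF _ IJ(1) P_disjoint _ p])
    show "xpath G' (\<lambda>_. False) ?I q ?J \<or> xpath G' (\<lambda>_. False) ?J q ?I" if "q \<in> P" for q
      using P_xpath[OF that] IJ(2) by blast
    show "f' e = (\<exists>q \<in> P. e \<in> set q \<and> \<not> xpath G' (\<lambda>_. False) ?I q ?J)" if "e \<in> \<Union> (set ` P)" for e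
    proof -
      have "e \<notin> arcs G" using that P_arcs_new by blast
      then show ?thesis by (simp add: f'_def)
    qed
  qed
  have old: "f' e = f e" if "e \<in> arcs G" for e using that by (simp add: f'_def)
  show ?thesis by (rule that[OF old orient])
qed

lemma parallel_path_extension_if_parallel_paths:
  fixes P :: "'e list set"
  assumes wf: "wf_dgraph G" and wf': "wf_dgraph G'" and ext: "extends G' G"
    and eo: "is_extraction_order G f s"
    and e0: "e0 \<in> arcs G" "tail G e0 = i" "head G e0 = j"
    and P_xpath: "\<And>p. p \<in> P \<Longrightarrow> xpath G' (\<lambda>_. False) i p j \<or> xpath G' (\<lambda>_. False) j p i"
    and P_arcs_new: "\<And>p. p \<in> P \<Longrightarrow> set p \<inter> arcs G = {}"
    and P_inner_new: "\<And>p. p \<in> P \<Longrightarrow> inner_verts G' p \<inter> verts G = {}"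
    and P_disjoint: "\<And>p q. \<lbrakk>p \<in> P; q \<in> P; p \<noteq> q\<rbrakk> \<Longrightarrow>
        set p \<inter> set q = {} \<and> inner_verts G' p \<inter> inner_verts G' q = {}"
    and P_arcs: "arcs G' - arcs G \<subseteq> \<Union> (set ` P)"
    and P_verts: "verts G' - verts G \<subseteq> (\<Union>p \<in> P. inner_verts G' p)"
  obtains f' QS where "parallel_path_extension G f s e0 (xtail G f e0) (xhead G f e0) G' f' QS"
proof -
  let ?I = "xtail G f e0" and ?J = "xhead G f e0"
  have ij: "i \<noteq> j" using extraction_order_no_loop[OF eo e0(1)] e0 by simp
  have arcs_disjoint: "set p \<inter> set q = {}" if "p \<in> P" "q \<in> P" "p \<noteq> q" for p q
    using P_disjoint[OF that] by blast
  obtain f' orient where f'_old: "\<And>e. e \<in> arcs G \<Longrightarrow> f' e = f e"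
    and orient: "\<And>p. p \<in> P \<Longrightarrow> xpath G' f' ?I (orient p) ?J \<and>
      walk_interior G' f' ?I (orient p) ?J = inner_verts G' p \<and> set (orient p) = set p"
    using reorient_parallel_paths[where f = f, OF ij e0(2,3) P_xpath P_arcs_new arcs_disjoint] by blast
  have "parallel_path_extension G f s e0 ?I ?J G' f' (orient ` P)"
  proof
    show "wf_dgraph G" "wf_dgraph G'" "extends G' G" "is_extraction_order G f s" "e0 \<in> arcs G"
      by (fact wf wf' ext eo e0(1))+
    show "xtail G f e0 = ?I" "xhead G f e0 = ?J" by simp_all
    show "f' e = f e" if "e \<in> arcs G" for e using f'_old[OF that] .
    show "xpath G' f' ?I Q ?J" if "Q \<in> orient ` P" for Q using that orient by blast
    show "set Q \<inter> arcs G = {}" if "Q \<in> orient ` P" for Q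
      using that orient P_arcs_new by (metis imageE)
    show "walk_interior G' f' ?I Q ?J \<inter> verts G = {}" if "Q \<in> orient ` P" for Q
      using that orient P_inner_new by (metis imageE)
    show "set Q1 \<inter> set Q2 = {} \<and> walk_interior G' f' ?I Q1 ?J \<inter> walk_interior G' f' ?I Q2 ?J = {}"
      if Q: "Q1 \<in> orient ` P" "Q2 \<in> orient ` P" "Q1 \<noteq> Q2" for Q1 Q2
    proof -
      obtain p1 p2 where "p1 \<in> P" "p2 \<in> P" "Q1 = orient p1" "Q2 = orient p2" "p1 \<noteq> p2"
        using Q by blast
      then show ?thesis using P_disjoint orient by simp
    qed
    show "arcs G' - arcs G \<subseteq> \<Union> (set ` orient ` P)"
    proof
      fix e assume "e \<in> arcs G' - arcs G"
      then obtain p where "p \<in> P" "e \<in> set p" using P_arcs by blast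
      then show "e \<in> \<Union> (set ` orient ` P)" using orient by blast
    qed
    show "verts G' - verts G \<subseteq> (\<Union>Q \<in> orient ` P. walk_interior G' f' ?I Q ?J)"
    proof
      fix v assume "v \<in> verts G' - verts G"
      then obtain p where "p \<in> P" "v \<in> inner_verts G' p" using P_verts by blast
      then show "v \<in> (\<Union>Q \<in> orient ` P. walk_interior G' f' ?I Q ?J)" using orient by blast
    qed
  qed
  then show ?thesis by (rule that)
qed

lemma ew_le_Suc_xwidth_if_parallel_paths:
  fixes P :: "'e list set"
  assumes wf: "wf_dgraph G" and wf': "wf_dgraph G'" and ext: "extends G' G"
    and eo: "is_extraction_order G f s"
    and e0: "e0 \<in> arcs G" "tail G e0 = i" "head G e0 = j"
    and P_xpath: "\<And>p. p \<in> P \<Longrightarrow> xpath G' (\<lambda>_. False) i p j \<or> xpath G' (\<lambda>_. False) j p i"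
    and P_arcs_new: "\<And>p. p \<in> P \<Longrightarrow> set p \<inter> arcs G = {}"
    and P_inner_new: "\<And>p. p \<in> P \<Longrightarrow> inner_verts G' p \<inter> verts G = {}"
    and P_disjoint: "\<And>p q. \<lbrakk>p \<in> P; q \<in> P; p \<noteq> q\<rbrakk> \<Longrightarrow>
        set p \<inter> set q = {} \<and> inner_verts G' p \<inter> inner_verts G' q = {}"
    and P_arcs: "arcs G' - arcs G \<subseteq> \<Union> (set ` P)"
    and P_verts: "verts G' - verts G \<subseteq> (\<Union>p \<in> P. inner_verts G' p)"
  shows "ew G' \<le> xwidth G f + 1"
proof -
  obtain f' QS where "parallel_path_extension G f s e0 (xtail G f e0) (xhead G f e0) G' f' QS"
    using parallel_path_extension_if_parallel_paths[OF assms] .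
  then show ?thesis by (rule parallel_path_extension.ew_extension_le)
qed

lemma ew_add_parallel_edges_le:
  assumes wf: "wf_dgraph G" and e0: "e0 \<in> arcs G" "tail G e0 = i" "head G e0 = j"
    and eo: "is_extraction_order G f s" and G': "add_parallel_edges G i j G'"
  shows "ew G' \<le> xwidth G f + 1"
proof (rule ew_le_Suc_xwidth_if_parallel_paths[OF wf _ _ eo e0])
  let ?P = "(\<lambda>e. [e]) ` (arcs G' - arcs G)"
  have "i \<noteq> j" using extraction_order_no_loop[OF eo e0(1)] e0 by simp
  show "xpath G' (\<lambda>_. False) i p j \<or> xpath G' (\<lambda>_. False) j p i" if p: "p \<in> ?P" for p
  proof -
    obtain e where e: "e \<in> arcs G'" "e \<notin> arcs G" "p = [e]" using p by blast
    then have "tail G' e = i \<and> head G' e = j \<or> tail G' e = j \<and> head G' e = i"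
      using G' unfolding add_parallel_edges_def by blast
    then show ?thesis using e \<open>i \<noteq> j\<close> by (auto simp: xpath_def walk_verts_def xtail_def xhead_def)
  qed
  show "wf_dgraph G'" "extends G' G" using G' by (simp_all add: add_parallel_edges_def)
  show "verts G' - verts G \<subseteq> (\<Union>p \<in> ?P. inner_verts G' p)"
    using G' by (simp add: add_parallel_edges_def)
  show "set p \<inter> arcs G = {}" "inner_verts G' p \<inter> verts G = {}" if "p \<in> ?P" for p
    using that by (auto simp: inner_verts_def)
  show "set p \<inter> set q = {} \<and> inner_verts G' p \<inter> inner_verts G' q = {}"
    if "p \<in> ?P" "q \<in> ?P" "p \<noteq> q" for p q
    using that by (auto simp: inner_verts_def)
  show "arcs G' - arcs G \<subseteq> \<Union> (set ` ?P)" by auto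
qed

lemma ew_add_parallel_paths_le:
  assumes wf: "wf_dgraph G" and e0: "e0 \<in> arcs G" "tail G e0 = i" "head G e0 = j"
    and eo: "is_extraction_order G f s" and G': "add_parallel_paths G i j G'"
  shows "ew G' \<le> xwidth G f + 1"
proof -
  obtain ps where ps:
      "\<forall>p \<in> set ps. (xpath G' (\<lambda>_. False) i p j \<or> xpath G' (\<lambda>_. False) j p i) \<and>
         set p \<inter> arcs G = {} \<and> inner_verts G' p \<inter> verts G = {}"
      "\<forall>k < length ps. \<forall>l < length ps. k \<noteq> l \<longrightarrow>
         set (ps ! k) \<inter> set (ps ! l) = {} \<and> inner_verts G' (ps ! k) \<inter> inner_verts G' (ps ! l) = {}"
      "arcs G' - arcs G = (\<Union>p \<in> set ps. set p)"
      "verts G' - verts G = (\<Union>p \<in> set ps. inner_verts G' p)"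
    using G' unfolding add_parallel_paths_def by (elim conjE exE) blast
  show ?thesis
  proof (rule ew_le_Suc_xwidth_if_parallel_paths[OF wf _ _ eo e0, where P = "set ps"])
    show "wf_dgraph G'" "extends G' G" using G' by (simp_all add: add_parallel_paths_def)
    show "set p \<inter> set q = {} \<and> inner_verts G' p \<inter> inner_verts G' q = {}"
      if "p \<in> set ps" "q \<in> set ps" "p \<noteq> q" for p q
      using that ps(2) by (metis in_set_conv_nth)
    show "xpath G' (\<lambda>_. False) i p j \<or> xpath G' (\<lambda>_. False) j p i"
      "set p \<inter> arcs G = {}" "inner_verts G' p \<inter> verts G = {}" if "p \<in> set ps" for p
      using ps(1) that by blast+
    show "arcs G' - arcs G \<subseteq> \<Union> (set ` set ps)"
      "verts G' - verts G \<subseteq> (\<Union>p \<in> set ps. inner_verts G' p)"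
      using ps(3,4) by simp_all
  qed
qed

theorem lemma34:
  fixes G :: "('v, 'e) dgraph" and e0 :: 'e and i j :: 'v
  assumes "wf_dgraph G"
    and "e0 \<in> arcs G" and "tail G e0 = i" and "head G e0 = j"
    and "\<exists>f s. is_extraction_order G f s"
  shows "(\<forall>G'. add_parallel_edges G i j G' \<longrightarrow> ew G' \<le> ew G + max_degree G) \<and>
         (\<forall>G'. add_parallel_paths G i j G' \<longrightarrow> ew G' \<le> ew G + max_degree G)"
proof -
  obtain f s where eo: "is_extraction_order G f s" and ew: "ew G = xwidth G f"
    using ew_attained[OF assms(5)] .
  have bound: "xwidth G f + 1 \<le> ew G + max_degree G"
    using max_degree_pos[OF assms(1,2)] ew by simp
  show ?thesis
  proof (intro conjI allI impI)
    fix G' assume "add_parallel_edges G i j G'"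
    then show "ew G' \<le> ew G + max_degree G"
      using ew_add_parallel_edges_le[OF assms(1-4) eo] bound by (meson order_trans)
  next
    fix G' assume "add_parallel_paths G i j G'"
    then show "ew G' \<le> ew G + max_degree G"
      using ew_add_parallel_paths_le[OF assms(1-4) eo] bound by (meson order_trans)
  qed
qed

end
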